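(* Let $n\ge2$ and $\mu=2^{n-1}1$. Then $\operatorname{im}(\eta)\subseteq\operatorname{im}(\varphi)$ as subspaces of $\tilde M^{\mu}\cong V_{n,3}$.
   Context: All vector spaces are over $\mathbb C$. A tableau of shape $\lambda\vdash N$ uses each element of $[N]$ once; $C_t$ is its column stabilizer; $\tilde M^\lambda$ is the span of column tabloids $[t]$ modulo $[t]=\operatorname{sgn}(\beta)[\beta t]$, $\beta\in C_t$, with $S_N$ acting by $\sigma[t]=[\sigma t]$. For a column $c$ and $1\le \ell\le$ (length of column $c+1$), $\pi^{\ell}_{c,1}([t])$ is the sum, over all entries $x$ of column $c$ of $t$, of the column tabloids $[t']$ with $t'$ obtained from $t$ by swapping $x$ with the $\ell$-th entry of column $c+1$. For $\mu=2^{m}1^{n-m}$ (columns of lengths $n,m$), $\eta([t])=m[t]-\sum_{j=1}^m\pi^j_{1,1}([t])$; here $m=n-1$. $V_{n,3}$ is the $\mathbb C$-span of left-comb brackets $[[x_1,\dots,x_n],y_1,\dots,y_{n-1}]$ with $\{x_i\}\cup\{y_j\}=[2n-1]$, modulo antisymmetry in the $x$'s and separately in the $y$'s; it is identified with $\tilde M^{2^{n-1}1}$ by sending such a bracket to the column tabloid with first column the $x$'s and second column the $y$'s. The map $\varphi:V_{n,3}\to V_{n,3}$ is $\varphi([[x_1,\dots,x_n],y_1,\dots,y_{n-1}])=[[x_1,\dots,x_n],y_1,\dots,y_{n-1}]-\sum_{i=1}^n(-1)^{n-i}[[y_1,\dots,y_{n-1},x_i],x_1,\dots,\widehat{x_i},\dots,x_n]$.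 *)

theory Defs
  imports "HOL-Combinatorics.Combinatorics"
begin

text \<open>A tableau of shape 2^(n-1) 1 on [2n-1] is a pair (xs, ys) of lists:
  xs = first column (length n, top to bottom), ys = second column (length n-1).\<close>

type_synonym tab = "nat list \<times> nat list"

definition valid_tab :: "nat \<Rightarrow> tab \<Rightarrow> bool" where
  "valid_tab n t \<longleftrightarrow> length (fst t) = n \<and> length (snd t) = n - 1 \<and>
     distinct (fst t @ snd t) \<and> set (fst t @ snd t) = {1..2*n-1}"

type_synonym vec = "tab \<Rightarrow> complex"

definition basis_vec :: "tab \<Rightarrow> vec" where
  "basis_vec t = (\<lambda>s. if s = t then 1 else 0)"

definition lspan :: "vec set \<Rightarrow> vec set" where
  "lspan S = {v. \<exists>F c. finite F \<and> F \<subseteq> S \<and> v = (\<lambda>s. \<Sum>u\<in>F. c u * u s)}"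

definition act :: "(nat \<Rightarrow> nat) \<Rightarrow> tab \<Rightarrow> tab" where
  "act \<sigma> t = (map \<sigma> (fst t), map \<sigma> (snd t))"

definition col_stab :: "nat \<Rightarrow> tab \<Rightarrow> (nat \<Rightarrow> nat) set" where
  "col_stab n t = {\<beta>. \<beta> permutes {1..2*n-1} \<and> \<beta> ` set (fst t) = set (fst t)
                        \<and> \<beta> ` set (snd t) = set (snd t)}"

text \<open>Relations defining the column tabloid space: [t] - sgn(beta) [beta t].\<close>

definition rels :: "nat \<Rightarrow> vec set" where
  "rels n = {v. \<exists>t \<beta>. valid_tab n t \<and> \<beta> \<in> col_stab n t \<and>
       v = (\<lambda>s. basis_vec t s - of_int (sign \<beta>) * basis_vec (act \<beta> t) s)}"

text \<open>Swap the i-th entry (0-based) of column 1 with the l-th entry (1-based) of column 2.\<close>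

definition swap_entries :: "tab \<Rightarrow> nat \<Rightarrow> nat \<Rightarrow> tab" where
  "swap_entries t i l = ((fst t)[i := snd t ! (l - 1)], (snd t)[l - 1 := fst t ! i])"

definition pi_11 :: "nat \<Rightarrow> nat \<Rightarrow> tab \<Rightarrow> vec" where
  "pi_11 n l t = (\<lambda>s. \<Sum>i<n. basis_vec (swap_entries t i l) s)"

text \<open>eta([t]) = m[t] - sum_{j=1}^m pi^j_{1,1}([t]) with m = n - 1 (lifted to tableaux).\<close>

definition eta_tab :: "nat \<Rightarrow> tab \<Rightarrow> vec" where
  "eta_tab n t = (\<lambda>s. of_nat (n - 1) * basis_vec t s - (\<Sum>j=1..n-1. pi_11 n j t s))"

text \<open>phi on the bracket [[x_1..x_n], y_1..y_{n-1}] identified with tableau (xs, ys);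
  index k is 0-based, k = i - 1, so (-1)^(n-i) = (-1)^(n-1-k).\<close>

definition remove_nth :: "nat \<Rightarrow> 'a list \<Rightarrow> 'a list" where
  "remove_nth k xs = take k xs @ drop (Suc k) xs"

definition phi_tab :: "nat \<Rightarrow> tab \<Rightarrow> vec" where
  "phi_tab n t = (\<lambda>s. basis_vec t s -
     (\<Sum>k<n. (-1) ^ (n - 1 - k) *
        basis_vec (snd t @ [fst t ! k], remove_nth k (fst t)) s))"

end

theory Submission
  imports Defs
begin

text \<open>Write t_k for the k-th tableau occurring in phi(t) and c_k = (-1)^(n-1-k). In
  phi(t) + \<Sum>_k c_k phi(t_k) the terms [t_k] cancel, leaving [t] minus a double sum over the
  tableaux obtained from t by two column exchanges. Modulo the column relations, exchanging x_k
  back with the last entry of the new first column only moves x_k to the bottom of column 1,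
  which gives c_k [t]; exchanging it with y_j gives, after moving x_k and y_j to the ends of
  their columns, minus c_k c_j times the tableau with x_k and y_j swapped. Altogether
  phi(t) + \<Sum>_k c_k phi(t_k) = (1 - n)[t] + \<Sum>_j pi^j_{1,1}[t] = -eta([t]).\<close>

lemma lspan_gen: "v \<in> S \<Longrightarrow> v \<in> lspan S"
  unfolding lspan_def
  by (rule CollectI, rule exI[of _ "{v}"], rule exI[of _ "\<lambda>_. 1"]) auto

lemma lspan_zero: "(\<lambda>s. 0) \<in> lspan S"
  unfolding lspan_def by (rule CollectI, rule exI[of _ "{}"]) auto

lemma lspan_mono: "S \<subseteq> T \<Longrightarrow> v \<in> lspan S \<Longrightarrow> v \<in> lspan T"
  unfolding lspan_def by blast

lemma lspan_smult: "v \<in> lspan S \<Longrightarrow> (\<lambda>s. a * v s) \<in> lspan S"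
proof -
  assume "v \<in> lspan S"
  then obtain F c where F: "finite F" "F \<subseteq> S" "v = (\<lambda>s. \<Sum>u\<in>F. c u * u s)"
    unfolding lspan_def by blast
  show ?thesis unfolding lspan_def
    by (rule CollectI, rule exI[of _ F], rule exI[of _ "\<lambda>u. a * c u"])
       (simp add: F sum_distrib_left mult.assoc)
qed

lemma lspan_add:
  assumes "v \<in> lspan S" "w \<in> lspan S"
  shows "(\<lambda>s. v s + w s) \<in> lspan S"
proof -
  obtain F c G d where F: "finite F" "F \<subseteq> S" "v = (\<lambda>s. \<Sum>u\<in>F. c u * u s)"
    and G: "finite G" "G \<subseteq> S" "w = (\<lambda>s. \<Sum>u\<in>G. d u * u s)"
    using assms unfolding lspan_def by blast
  define e where "e u = (if u \<in> F then c u else 0) + (if u \<in> G then d u else 0)" for u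
  have "v s + w s = (\<Sum>u\<in>F \<union> G. e u * u s)" for s
    using F G by (simp add: e_def distrib_right sum.distrib if_distrib[where f="\<lambda>x. x * _"]
        sum.If_cases Int_absorb1 Int_absorb2)
  then show ?thesis unfolding lspan_def using F G by blast
qed

lemma lspan_diff: "v \<in> lspan S \<Longrightarrow> w \<in> lspan S \<Longrightarrow> (\<lambda>s. v s - w s) \<in> lspan S"
  using lspan_add[of v S "\<lambda>s. - 1 * w s"] lspan_smult[of w S "- 1"] by simp

lemma lspan_sum:
  "finite I \<Longrightarrow> (\<And>i. i \<in> I \<Longrightarrow> f i \<in> lspan S) \<Longrightarrow> (\<lambda>s. \<Sum>i\<in>I. f i s) \<in> lspan S"
  by (induction I rule: finite_induct) (simp_all add: lspan_zero lspan_add)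

lemma alternating_move_to_end:
  fixes F :: "'a list \<Rightarrow> vec"
  assumes swap: "\<And>l1 a b l2. P (l1 @ [a, b] @ l2) \<Longrightarrow>
      (\<lambda>s. F (l1 @ [a, b] @ l2) s + F (l1 @ [b, a] @ l2) s) \<in> lspan S"
    and P_swap: "\<And>l1 a b l2. P (l1 @ [a, b] @ l2) \<Longrightarrow> P (l1 @ [b, a] @ l2)"
    and "P (l1 @ [a] @ l2)"
  shows "(\<lambda>s. F (l1 @ [a] @ l2) s - (-1) ^ length l2 * F (l1 @ l2 @ [a]) s) \<in> lspan S"
  using assms(3)
proof (induction l2 arbitrary: l1)
  case Nil
  then show ?case using lspan_zero by simp
next
  case (Cons b l2)
  have "(\<lambda>s. F (l1 @ [a, b] @ l2) s + F (l1 @ [b, a] @ l2) s) \<in> lspan S"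
    using swap Cons.prems by simp
  moreover have "(\<lambda>s. F ((l1 @ [b]) @ [a] @ l2) s - (-1) ^ length l2 * F ((l1 @ [b]) @ l2 @ [a]) s)
      \<in> lspan S"
    using Cons.IH[of "l1 @ [b]"] P_swap[of l1 a b l2] Cons.prems by simp
  ultimately show ?case
    using lspan_diff by fastforce
qed

lemma remove_nth_append: "length l1 = k \<Longrightarrow> remove_nth k (l1 @ [a] @ l2) = l1 @ l2"
  by (simp add: remove_nth_def)

lemma length_remove_nth: "k < length xs \<Longrightarrow> length (remove_nth k xs) = length xs - 1"
  by (simp add: remove_nth_def)

lemma remove_nth_list_update: "remove_nth k (xs[k := y]) = remove_nth k xs"
  by (simp add: remove_nth_def)

lemma mset_remove_nth_append_nth:
  assumes "k < length xs"
  shows "mset (remove_nth k xs @ [xs ! k]) = mset xs"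
proof -
  have "mset (remove_nth k xs @ [xs ! k]) = mset (take k xs @ [xs ! k] @ drop (Suc k) xs)"
    by (simp add: remove_nth_def)
  also have "take k xs @ [xs ! k] @ drop (Suc k) xs = xs"
    by (simp only: append_Cons append_Nil id_take_nth_drop[OF assms, symmetric])
  finally show ?thesis .
qed

lemma mset_swap_entries:
  assumes "k < length xs" "j < length ys"
  shows "mset (xs[k := ys ! j] @ ys[j := xs ! k]) = mset (xs @ ys)"
proof -
  obtain A B where "mset xs = add_mset (xs ! k) A" "mset ys = add_mset (ys ! j) B"
    using multi_member_split[OF nth_mem_mset] assms by metis
  then show ?thesis
    using assms by (simp add: mset_update)
qed

lemma map_transpose_adjacent:
  "distinct (l1 @ [a, b] @ l2) \<Longrightarrow> map (transpose a b) (l1 @ [a, b] @ l2) = l1 @ [b, a] @ l2"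
  by (auto intro!: map_idI transpose_apply_other)

lemma map_transpose_disjoint:
  "a \<notin> set l \<Longrightarrow> b \<notin> set l \<Longrightarrow> map (transpose a b) l = l"
  by (intro map_idI transpose_apply_other) auto

lemma valid_tab_mset_eq:
  assumes "valid_tab n (xs, ys)" "length xs' = n" "length ys' = n - 1"
    and "mset (xs' @ ys') = mset (xs @ ys)"
  shows "valid_tab n (xs', ys')"
  using assms mset_eq_imp_distinct_iff[OF assms(4)] mset_eq_setD[OF assms(4)]
  unfolding valid_tab_def by simp

lemma valid_tab_move_nth_fst:
  assumes "valid_tab n (xs, ys)" "k < length xs"
  shows "valid_tab n (remove_nth k xs @ [xs ! k], ys)"
proof (rule valid_tab_mset_eq[OF assms(1)])
  show "mset ((remove_nth k xs @ [xs ! k]) @ ys) = mset (xs @ ys)"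
    using mset_remove_nth_append_nth[OF assms(2)] by simp
qed (use assms in \<open>simp_all add: valid_tab_def length_remove_nth\<close>)

lemma basis_add_transpose_in_lspan_rels:
  assumes "valid_tab n t" "a \<noteq> b" "transpose a b \<in> col_stab n t"
  shows "(\<lambda>s. basis_vec t s + basis_vec (act (transpose a b) t) s) \<in> lspan (rels n)"
proof -
  have "(\<lambda>s. basis_vec t s - of_int (sign (transpose a b)) * basis_vec (act (transpose a b) t) s)
      \<in> rels n"
    using assms(1,3) unfolding rels_def by blast
  then show ?thesis
    using assms(2) by (simp add: lspan_gen sign_swap_id)
qed

lemma transpose_in_col_stab:
  assumes "valid_tab n t" "a \<noteq> b" "{a, b} \<subseteq> set (fst t) \<or> {a, b} \<subseteq> set (snd t)"
  shows "transpose a b \<in> col_stab n t"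
proof -
  have "a \<in> {1..2*n-1}" "b \<in> {1..2*n-1}"
    using assms unfolding valid_tab_def by auto
  moreover have "set (fst t) \<inter> set (snd t) = {}"
    using assms(1) unfolding valid_tab_def by simp
  ultimately show ?thesis
    using assms(3) unfolding col_stab_def by (auto intro!: permutes_swap_id transpose_image_eq)
qed

lemma basis_add_swap_fst_in_lspan_rels:
  assumes "valid_tab n (l1 @ [a, b] @ l2, ys)"
  shows "(\<lambda>s. basis_vec (l1 @ [a, b] @ l2, ys) s + basis_vec (l1 @ [b, a] @ l2, ys) s)
    \<in> lspan (rels n)"
proof -
  have d: "distinct (l1 @ [a, b] @ l2 @ ys)"
    using assms unfolding valid_tab_def by simp
  then have "act (transpose a b) (l1 @ [a, b] @ l2, ys) = (l1 @ [b, a] @ l2, ys)"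
    unfolding act_def by (simp add: map_transpose_adjacent map_transpose_disjoint)
  moreover have "transpose a b \<in> col_stab n (l1 @ [a, b] @ l2, ys)"
    using assms d by (intro transpose_in_col_stab) auto
  ultimately show ?thesis
    using basis_add_transpose_in_lspan_rels[OF assms, of a b] d by simp
qed

lemma basis_add_swap_snd_in_lspan_rels:
  assumes "valid_tab n (xs, l1 @ [a, b] @ l2)"
  shows "(\<lambda>s. basis_vec (xs, l1 @ [a, b] @ l2) s + basis_vec (xs, l1 @ [b, a] @ l2) s)
    \<in> lspan (rels n)"
proof -
  have d: "distinct (xs @ l1 @ [a, b] @ l2)"
    using assms unfolding valid_tab_def by simp
  then have "act (transpose a b) (xs, l1 @ [a, b] @ l2) = (xs, l1 @ [b, a] @ l2)"
    unfolding act_def by (simp add: map_transpose_adjacent map_transpose_disjoint)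
  moreover have "transpose a b \<in> col_stab n (xs, l1 @ [a, b] @ l2)"
    using assms d by (intro transpose_in_col_stab) auto
  ultimately show ?thesis
    using basis_add_transpose_in_lspan_rels[OF assms, of a b] d by simp
qed

lemma basis_move_nth_fst_in_lspan_rels:
  assumes "valid_tab n (xs, ys)" "k < length xs"
  shows "(\<lambda>s. basis_vec (xs, ys) s
      - (-1) ^ (length xs - Suc k) * basis_vec (remove_nth k xs @ [xs ! k], ys) s) \<in> lspan (rels n)"
proof -
  define l1 l2 a where "l1 = take k xs" and "l2 = drop (Suc k) xs" and "a = xs ! k"
  have xs: "xs = l1 @ [a] @ l2"
    unfolding l1_def l2_def a_def append_Cons append_Nil by (rule id_take_nth_drop[OF assms(2)])
  have k: "length l1 = k"
    using assms(2) by (simp add: l1_def)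
  have "(\<lambda>s. basis_vec (l1 @ [a] @ l2, ys) s - (-1) ^ length l2 * basis_vec (l1 @ l2 @ [a], ys) s)
      \<in> lspan (rels n)"
  proof (rule alternating_move_to_end[where P = "\<lambda>l. valid_tab n (l, ys)"])
    show "valid_tab n (l1' @ [b, a'] @ l2', ys)" if "valid_tab n (l1' @ [a', b] @ l2', ys)"
      for l1' a' b l2'
      using that by (auto simp: valid_tab_def)
  qed (use assms xs basis_add_swap_fst_in_lspan_rels in simp_all)
  then show ?thesis
    unfolding a_def[symmetric] using xs k remove_nth_append[OF k] by simp
qed

lemma basis_move_nth_snd_in_lspan_rels:
  assumes "valid_tab n (xs, ys)" "k < length ys"
  shows "(\<lambda>s. basis_vec (xs, ys) s
      - (-1) ^ (length ys - Suc k) * basis_vec (xs, remove_nth k ys @ [ys ! k]) s) \<in> lspan (rels n)"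
proof -
  define l1 l2 a where "l1 = take k ys" and "l2 = drop (Suc k) ys" and "a = ys ! k"
  have ys: "ys = l1 @ [a] @ l2"
    unfolding l1_def l2_def a_def append_Cons append_Nil by (rule id_take_nth_drop[OF assms(2)])
  have k: "length l1 = k"
    using assms(2) by (simp add: l1_def)
  have "(\<lambda>s. basis_vec (xs, l1 @ [a] @ l2) s - (-1) ^ length l2 * basis_vec (xs, l1 @ l2 @ [a]) s)
      \<in> lspan (rels n)"
  proof (rule alternating_move_to_end[where P = "\<lambda>l. valid_tab n (xs, l)"])
    show "valid_tab n (xs, l1' @ [b, a'] @ l2')" if "valid_tab n (xs, l1' @ [a', b] @ l2')"
      for l1' a' b l2'
      using that by (auto simp: valid_tab_def)
  qed (use assms ys basis_add_swap_snd_in_lspan_rels in simp_all)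
  then show ?thesis
    unfolding a_def[symmetric] using ys k remove_nth_append[OF k] by simp
qed

definition phi_term :: "tab \<Rightarrow> nat \<Rightarrow> tab" where
  "phi_term t k = (snd t @ [fst t ! k], remove_nth k (fst t))"

lemma phi_tab_phi_term:
  "phi_tab n t = (\<lambda>s. basis_vec t s - (\<Sum>k<n. (-1) ^ (n - 1 - k) * basis_vec (phi_term t k) s))"
  unfolding phi_tab_def phi_term_def ..

lemma valid_tab_phi_term:
  assumes "valid_tab n t" "k < n"
  shows "valid_tab n (phi_term t k)"
proof -
  obtain xs ys where t: "t = (xs, ys)" by fastforce
  have lengths: "length xs = n" "length ys = n - 1"
    using assms(1) t unfolding valid_tab_def by simp_all
  have "mset ((ys @ [xs ! k]) @ remove_nth k xs) = mset (xs @ ys)"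
    using mset_remove_nth_append_nth[of k xs] assms(2) lengths by (simp add: ac_simps)
  moreover have "length (remove_nth k xs) = n - 1"
    using assms(2) lengths by (simp add: length_remove_nth)
  ultimately show ?thesis
    using valid_tab_mset_eq[of n xs ys] assms(1,2) lengths t unfolding phi_term_def by simp
qed

lemma basis_phi_term_last_in_lspan_rels:
  assumes "valid_tab n t" "k < n"
  shows "(\<lambda>s. basis_vec t s - (-1) ^ (n - 1 - k) * basis_vec (phi_term (phi_term t k) (n - 1)) s)
    \<in> lspan (rels n)"
proof -
  obtain xs ys where t: "t = (xs, ys)" by fastforce
  have lengths: "length xs = n" "length ys = n - 1"
    using assms(1) t unfolding valid_tab_def by simp_all
  then have "phi_term (phi_term t k) (n - 1) = (remove_nth k xs @ [xs ! k], ys)"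
    unfolding t phi_term_def by (simp add: remove_nth_def nth_append)
  then show ?thesis
    using basis_move_nth_fst_in_lspan_rels[of n xs ys k] assms lengths t by simp
qed

lemma basis_swap_entries_in_lspan_rels:
  assumes "valid_tab n t" "k < n" "j < n - 1"
  shows "(\<lambda>s. basis_vec (swap_entries t k (Suc j)) s
      + (-1) ^ (n - 1 - k) * (-1) ^ (n - 1 - j) * basis_vec (phi_term (phi_term t k) j) s)
    \<in> lspan (rels n)"
proof -
  obtain xs ys where t: "t = (xs, ys)" by fastforce
  have lengths: "length xs = n" "length ys = n - 1"
    using assms(1) t unfolding valid_tab_def by simp_all
  define x y where "x = xs ! k" and "y = ys ! j"
  have swap: "swap_entries t k (Suc j) = (xs[k := y], ys[j := x])"
    unfolding t swap_entries_def x_def y_def by simp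
  have phi: "phi_term (phi_term t k) j = (remove_nth k xs @ [y], remove_nth j ys @ [x])"
    using assms(3) lengths unfolding t phi_term_def x_def y_def
    by (simp add: remove_nth_def nth_append)
  have "mset (xs[k := y] @ ys[j := x]) = mset (xs @ ys)"
    using mset_swap_entries[of k xs j ys] assms(2,3) lengths unfolding x_def y_def by simp
  then have valid_swap: "valid_tab n (xs[k := y], ys[j := x])"
    using valid_tab_mset_eq[of n xs ys] assms(1) lengths t by simp
  have valid_mid: "valid_tab n (remove_nth k xs @ [y], ys[j := x])"
    using valid_tab_move_nth_fst[OF valid_swap, of k] assms(2) lengths
    by (simp add: remove_nth_list_update)
  have fst_move: "(\<lambda>s. basis_vec (xs[k := y], ys[j := x]) s
      - (-1) ^ (n - 1 - k) * basis_vec (remove_nth k xs @ [y], ys[j := x]) s) \<in> lspan (rels n)"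
    using basis_move_nth_fst_in_lspan_rels[OF valid_swap, of k] assms(2) lengths
    by (simp add: remove_nth_list_update)
  have snd_move: "(\<lambda>s. basis_vec (remove_nth k xs @ [y], ys[j := x]) s
      - (-1) ^ (n - 1 - Suc j) * basis_vec (remove_nth k xs @ [y], remove_nth j ys @ [x]) s)
    \<in> lspan (rels n)"
    using basis_move_nth_snd_in_lspan_rels[OF valid_mid, of j] assms(3) lengths
    by (simp add: remove_nth_list_update)
  have "n - 1 - j = Suc (n - 1 - Suc j)"
    using assms(3) by simp
  then have sign: "(-1) ^ (n - 1 - j) = - ((-1) ^ (n - 1 - Suc j) :: complex)"
    by simp
  show ?thesis
    using lspan_add[OF fst_move lspan_smult[OF snd_move, of "(-1) ^ (n - 1 - k)"]]
    unfolding swap phi sign by (simp add: algebra_simps)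
qed

lemma eta_tab_swap_entries:
  "eta_tab n t s = of_nat (n - 1) * basis_vec t s
     - (\<Sum>k<n. \<Sum>j<n - 1. basis_vec (swap_entries t k (Suc j)) s)"
  unfolding eta_tab_def pi_11_def
  by (simp add: sum.atLeast1_atMost_eq sum.swap[of _ "{..<n}"])

lemma eta_phi_decomposition:
  fixes n :: nat and t :: tab
  defines "c k \<equiv> (-1 :: complex) ^ (n - 1 - k)"
    and "D k m \<equiv> basis_vec (phi_term (phi_term t k) m)"
  assumes "n \<ge> 1"
  shows "eta_tab n t s + phi_tab n t s + (\<Sum>k<n. c k * phi_tab n (phi_term t k) s)
    = (\<Sum>k<n. basis_vec t s - c k * D k (n - 1) s)
      - (\<Sum>k<n. \<Sum>j<n - 1. basis_vec (swap_entries t k (Suc j)) s + c k * c j * D k j s)"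
proof -
  have split_last: "(\<Sum>m<n. c m * D k m s) = (\<Sum>j<n - 1. c j * D k j s) + D k (n - 1) s" for k
    using assms(3) lessThan_Suc[of "n - 1"] by (simp add: c_def)
  have "(\<Sum>k<n. c k * phi_tab n (phi_term t k) s)
      = (\<Sum>k<n. c k * basis_vec (phi_term t k) s)
        - (\<Sum>k<n. c k * D k (n - 1) s) - (\<Sum>k<n. \<Sum>j<n - 1. c k * c j * D k j s)"
    unfolding phi_tab_phi_term[of n "phi_term t _"] D_def[symmetric] c_def[symmetric] split_last
    by (simp add: right_diff_distrib distrib_left sum_distrib_left sum_subtractf sum.distrib mult.assoc)
  then show ?thesis
    using assms(3)
    unfolding eta_tab_swap_entries phi_tab_phi_term[of n t] c_def[symmetric]
    by (simp add: sum_subtractf sum.distrib of_nat_diff algebra_simps)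
qed

theorem mainTheorem6:
  fixes n :: nat
  assumes "n \<ge> 2"
  shows "\<forall>t. valid_tab n t \<longrightarrow>
           eta_tab n t \<in> lspan (phi_tab n ` {t'. valid_tab n t'} \<union> rels n)"
proof (intro allI impI)
  fix t assume t: "valid_tab n t"
  let ?G = "phi_tab n ` {t'. valid_tab n t'} \<union> rels n"
  define c :: "nat \<Rightarrow> complex" where "c k = (-1) ^ (n - 1 - k)" for k
  define R where "R s = (\<Sum>k<n. basis_vec t s - c k * basis_vec (phi_term (phi_term t k) (n - 1)) s)
    - (\<Sum>k<n. \<Sum>j<n - 1. basis_vec (swap_entries t k (Suc j)) s
         + c k * c j * basis_vec (phi_term (phi_term t k) j) s)" for s
  have "R \<in> lspan (rels n)"
    unfolding R_def c_def using t
    by (intro lspan_diff lspan_sum basis_phi_term_last_in_lspan_rels basis_swap_entries_in_lspan_rels) auto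
  then have "R \<in> lspan ?G"
    by (rule lspan_mono[rotated]) blast
  moreover have "phi_tab n t' \<in> lspan ?G" if "valid_tab n t'" for t'
    using that by (intro lspan_gen) blast
  ultimately have "(\<lambda>s. R s - phi_tab n t s - (\<Sum>k<n. c k * phi_tab n (phi_term t k) s)) \<in> lspan ?G"
    using t valid_tab_phi_term by (intro lspan_diff lspan_sum lspan_smult) auto
  moreover have "eta_tab n t = (\<lambda>s. R s - phi_tab n t s - (\<Sum>k<n. c k * phi_tab n (phi_term t k) s))"
    using eta_phi_decomposition[of n t] assms unfolding R_def c_def by (simp add: fun_eq_iff algebra_simps)
  ultimately show "eta_tab n t \<in> lspan ?G"
    by simp
qed

end
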